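(* Let $f:\mathbb{R}^n\to\mathbb{R}$ be bounded below and continuously differentiable with $\nabla f$ Lipschitz with constant $L_{\nabla f}$. Let $x\in\mathbb{R}^n$, $\Delta>0$, points $y_1,\ldots,y_p$ with $\|y_i-x\|\le\beta\Delta$ for some $\beta>0$ and all $i$, with $\hat F$ invertible, and let $m$ be the minimum Frobenius norm quadratic interpolation model of $f$ and $\ell_1,\ldots,\ell_p$ the associated minimum Frobenius norm Lagrange polynomials (see context). Suppose $\max_{y\in B(x,\Delta)}\sum_i|\ell_i(y)|\le\Lambda_1$ and $\max_{y\in B(x,\Delta)}\max_i|\ell_i(y)|\le\Lambda_\infty$. Then for all $y\in B(x,\Delta)$, $|m(y)-f(y)|\le\kappa_{\mathrm{mf}}\Delta^2$ and $\|\nabla m(y)-\nabla f(y)\|\le\kappa_{\mathrm{mg}}\Delta$, where $$\kappa_{\mathrm{mf}}=\frac{L_{\nabla f}+\kappa_H}{2}\beta^2\Lambda_1+\frac{L_{\nabla f}+\kappa_H}{2},\qquad\kappa_{\mathrm{mg}}=2\kappa_{\mathrm{mf}}+2\kappa_H,\qquad \kappa_H:=12L_{\nabla f}p\beta^2\Lambda_\infty.$$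
   Context: Here $n+2\le p\le(n+1)(n+2)/2-1$. Let $\hat s_i=(y_i-x)/\Delta$, $\hat M$ with rows $[1,\hat s_i^T]$, $\hat P_{ij}=\tfrac12(\hat s_i^T\hat s_j)^2$, $\hat F=\begin{bmatrix}\hat P&\hat M\\ \hat M^T&0\end{bmatrix}$. For data values $v_1,\ldots,v_p$, the minimum Frobenius norm interpolant is the quadratic $q(y)=c+g^T(y-x)+\tfrac12(y-x)^TH(y-x)$ with $H$ symmetric minimizing $\tfrac14\|H\|_F^2$ subject to $q(y_i)=v_i$ for all $i$; when $\hat F$ is invertible it is unique and obtained by solving $\hat F[\hat\lambda;c;\Delta g]=[v;0;0_n]$ and setting $H=\sum_i(\hat\lambda_i/\Delta^4)(y_i-x)(y_i-x)^T$. The model $m$ uses $v_i=f(y_i)$; the Lagrange polynomial $\ell_i$ uses $v_j=\delta_{ij}$. $B(x,\Delta)=\{y:\|y-x\|\le\Delta\}$. *)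

theory Defs
  imports "HOL-Analysis.Analysis"
begin

text \<open>Quadratic models around a base point x are triples (c, g, H) representing
  q(y) = c + g^T (y - x) + 1/2 (y - x)^T H (y - x).\<close>

type_synonym 'n quadmodel = "real \<times> (real^'n) \<times> ((real^'n)^'n)"

definition qeval :: "real^'n \<Rightarrow> 'n quadmodel \<Rightarrow> real^'n \<Rightarrow> real" where
  "qeval x q y = (case q of (c, g, H) \<Rightarrow>
      c + g \<bullet> (y - x) + (1/2) * ((y - x) \<bullet> (H *v (y - x))))"

text \<open>Gradient of the quadratic (H is symmetric for the models considered).\<close>
definition qgrad :: "real^'n \<Rightarrow> 'n quadmodel \<Rightarrow> real^'n \<Rightarrow> real^'n" where
  "qgrad x q y = (case q of (c, g, H) \<Rightarrow> g + H *v (y - x))"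

definition frob_sq :: "real^'n^'n \<Rightarrow> real" where
  "frob_sq H = (\<Sum>i\<in>UNIV. \<Sum>j\<in>UNIV. (H $ i $ j)^2)"

definition mfn_interp :: "real^'n \<Rightarrow> ('p \<Rightarrow> real^'n) \<Rightarrow> ('p \<Rightarrow> real) \<Rightarrow> 'n quadmodel \<Rightarrow> bool" where
  "mfn_interp x y v q \<longleftrightarrow>
     (case q of (c, g, H) \<Rightarrow>
        transpose H = H \<and> (\<forall>i. qeval x q (y i) = v i) \<and>
        (\<forall>c' g' H'. transpose H' = H' \<and> (\<forall>i. qeval x (c', g', H') (y i) = v i)
            \<longrightarrow> (1/4) * frob_sq H \<le> (1/4) * frob_sq H'))"

text \<open>The matrix Fhat = [[Phat, Mhat],[Mhat^T, 0]], rows/columns indexed by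
  'p (the points) + (unit (constant term) + 'n (coordinates)).\<close>
definition Fhat :: "real^'n \<Rightarrow> real \<Rightarrow> ('p::finite \<Rightarrow> real^'n)
     \<Rightarrow> real^('p + (unit + 'n))^('p + (unit + 'n))" where
  "Fhat x \<Delta> y = (let s = (\<lambda>i. (1/\<Delta>) *\<^sub>R (y i - x)) in
     (\<chi> r c. (case (r, c) of
        (Inl i, Inl j) \<Rightarrow> (1/2) * (s i \<bullet> s j)^2
      | (Inl i, Inr (Inl _)) \<Rightarrow> 1
      | (Inl i, Inr (Inr k)) \<Rightarrow> s i $ k
      | (Inr (Inl _), Inl j) \<Rightarrow> 1
      | (Inr (Inr k), Inl j) \<Rightarrow> s j $ k
      | _ \<Rightarrow> 0)))"

end

theory Submission
  imports Defs
begin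

(* The minimum Frobenius norm interpolant is characterised by orthogonality: it interpolates
   the data with a symmetric Hessian that is Frobenius-orthogonal to the Hessian of every
   symmetric quadratic vanishing at the sample points, and invertibility of Fhat makes it
   unique. Hence interpolation is linear in the data, m = sum_i f(y_i) l_i, and it reproduces
   affine functions. Subtracting the first-order Taylor model T of f at x gives
   m = T + sum_i r_i l_i, where the Taylor residuals satisfy |r_i| <= L/2 (beta Delta)^2.
   The value error at z is then the Taylor error of T at z plus at most max|r_i| Lambda1, and
   the gradient error is the Lipschitz error of grad plus p max|r_i| times the bound
   9 Lambda_inf / Delta on the Lagrange gradients. That bound holds for every quadratic with
   symmetric Hessian bounded by Lambda_inf on the ball: its values at x +- u control the
   linear term and the quadratic form, and polarization controls the Hessian term. *)

lemma inner_eq_0_if_norm_minimal: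
  fixes a b :: "'a::real_inner"
  assumes "\<And>t. norm a \<le> norm (a + t *\<^sub>R b)"
  shows "a \<bullet> b = 0"
proof (cases "b = 0")
  case False
  define t where "t = - (a \<bullet> b) / (b \<bullet> b)"
  have bb: "b \<bullet> b > 0" using False by simp
  have "(norm a)\<^sup>2 \<le> (norm (a + t *\<^sub>R b))\<^sup>2"
    using assms[of t] by (simp add: power_mono)
  also have "\<dots> = (norm a)\<^sup>2 - (a \<bullet> b)\<^sup>2 / (b \<bullet> b)"
    unfolding power2_norm_eq_inner using bb
    by (simp add: inner_diff_left inner_diff_right inner_commute t_def field_simps power2_eq_square)
  finally have "(a \<bullet> b)\<^sup>2 / (b \<bullet> b) \<le> 0" by simp
  with bb show ?thesis by (simp add: divide_le_0_iff not_le[symmetric])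
qed simp

lemma norm_le_if_inner_le:
  fixes G :: "'a::real_inner"
  assumes "r > 0" and "\<And>u. norm u \<le> r \<Longrightarrow> G \<bullet> u \<le> K"
  shows "norm G \<le> K / r"
proof (cases "G = 0")
  case True
  then show ?thesis using assms(2)[of 0] assms(1) by simp
next
  case False
  have "r * norm G = G \<bullet> ((r / norm G) *\<^sub>R G)"
    using False by (simp add: power2_norm_eq_inner[symmetric] power2_eq_square)
  also have "\<dots> \<le> K" using assms by (intro assms(2)) simp
  finally show ?thesis using assms(1) by (simp add: field_simps)
qed

lemma norm_sum_scaleR_le:
  fixes v :: "'i \<Rightarrow> 'a::real_normed_vector"
  assumes "\<And>i. i \<in> A \<Longrightarrow> \<bar>r i\<bar> \<le> R"
  shows "norm (\<Sum>i\<in>A. r i *\<^sub>R v i) \<le> R * (\<Sum>i\<in>A. norm (v i))"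
proof -
  have "norm (\<Sum>i\<in>A. r i *\<^sub>R v i) \<le> (\<Sum>i\<in>A. \<bar>r i\<bar> * norm (v i))"
    by (rule order_trans[OF norm_sum]) simp
  also have "\<dots> \<le> (\<Sum>i\<in>A. R * norm (v i))"
    using assms by (intro sum_mono mult_right_mono) auto
  finally show ?thesis by (simp add: sum_distrib_left)
qed

lemma symmetric_bilinear_le:
  fixes H :: "real^'n^'n"
  assumes sym: "transpose H = H"
    and quad: "\<And>p. norm p \<le> r \<Longrightarrow> \<bar>p \<bullet> (H *v p)\<bar> \<le> K"
    and "norm v \<le> r" and "norm w \<le> r"
  shows "\<bar>(H *v v) \<bullet> w\<bar> \<le> 2 * K"
proof -
  define P Q where "P = (1/2) *\<^sub>R (v + w)" and "Q = (1/2) *\<^sub>R (v - w)"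
  have "norm P \<le> r" and "norm Q \<le> r"
    using assms(3,4) norm_triangle_ineq[of v w] norm_triangle_ineq4[of v w]
    by (simp_all add: P_def Q_def)
  then have "\<bar>P \<bullet> (H *v P)\<bar> \<le> K" and "\<bar>Q \<bullet> (H *v Q)\<bar> \<le> K"
    by (simp_all add: quad)
  moreover have "v \<bullet> (H *v w) = (H *v v) \<bullet> w"
    by (metis sym dot_lmul_matrix vector_transpose_matrix)
  then have "(H *v v) \<bullet> w = P \<bullet> (H *v P) - Q \<bullet> (H *v Q)"
    by (simp add: P_def Q_def matrix_vector_mult_scaleR matrix_vector_right_distrib
        matrix_vector_mult_diff_distrib inner_add_left inner_add_right inner_diff_left
        inner_diff_right inner_commute algebra_simps)
  ultimately show ?thesis by linarith
qed

lemma transpose_linear: "linear (transpose :: real^'n^'m \<Rightarrow> real^'m^'n)"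
  by (rule linearI) (auto simp: transpose_def vec_eq_iff)

lemma sum_UNIV_Plus:
  "sum h (UNIV :: ('a::finite + 'b::finite) set) = sum (h \<circ> Inl) UNIV + sum (h \<circ> Inr) UNIV"
  by (metis UNIV_Plus_UNIV finite sum.Plus)

lemma first_order_remainder_le:
  fixes \<phi> \<phi>' :: "real \<Rightarrow> real"
  assumes deriv: "\<And>t. t \<in> {0..1} \<Longrightarrow> (\<phi> has_real_derivative \<phi>' t) (at t)"
    and lip: "\<And>t. t \<in> {0..1} \<Longrightarrow> \<bar>\<phi>' t - \<phi>' 0\<bar> \<le> K * t"
  shows "\<bar>\<phi> 1 - \<phi> 0 - \<phi>' 0\<bar> \<le> K / 2"
proof -
  have shifted: "((\<lambda>t. \<phi> t - t * \<phi>' 0 + s * (K / 2 * t\<^sup>2)) has_real_derivative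
      \<phi>' t - \<phi>' 0 + s * (K * t)) (at t)" if "t \<in> {0..1}" for s t
    by (rule deriv[OF that] derivative_eq_intros refl | simp)+
  have "\<phi> 1 - 1 * \<phi>' 0 + (-1) * (K / 2 * 1\<^sup>2) \<le> \<phi> 0 - 0 * \<phi>' 0 + (-1) * (K / 2 * 0\<^sup>2)"
  proof (rule deriv_nonpos_imp_antimono[OF shifted])
    show "\<phi>' t - \<phi>' 0 + (-1) * (K * t) \<le> 0" if "t \<in> {0..1}" for t
      using lip[OF that] by linarith
  qed simp_all
  moreover have "\<phi> 0 - 0 * \<phi>' 0 + 1 * (K / 2 * 0\<^sup>2) \<le> \<phi> 1 - 1 * \<phi>' 0 + 1 * (K / 2 * 1\<^sup>2)"
  proof (rule deriv_nonneg_imp_mono[OF shifted])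
    show "0 \<le> \<phi>' t - \<phi>' 0 + 1 * (K * t)" if "t \<in> {0..1}" for t
      using lip[OF that] by linarith
  qed simp_all
  ultimately show ?thesis unfolding abs_le_iff by auto
qed

lemma lipschitz_gradient_remainder_le:
  fixes f :: "'a::real_inner \<Rightarrow> real"
  assumes deriv: "\<And>z. (f has_derivative (\<lambda>h. grad z \<bullet> h)) (at z)"
    and lip: "L-lipschitz_on UNIV grad"
  shows "\<bar>f b - f a - grad a \<bullet> (b - a)\<bar> \<le> L / 2 * (norm (b - a))\<^sup>2"
proof -
  define d where "d = b - a"
  have "((\<lambda>t. f (a + t *\<^sub>R d)) has_real_derivative grad (a + t *\<^sub>R d) \<bullet> d) (at t)" for t
  proof -
    have "((\<lambda>t. a + t *\<^sub>R d) has_derivative (\<lambda>h. h *\<^sub>R d)) (at t)"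
      by (auto intro!: derivative_eq_intros)
    from has_derivative_compose[OF this deriv] show ?thesis
      by (rule has_derivative_imp_has_field_derivative) simp
  qed
  moreover have "\<bar>grad (a + t *\<^sub>R d) \<bullet> d - grad (a + 0 *\<^sub>R d) \<bullet> d\<bar> \<le> L * (norm d)\<^sup>2 * t"
    if "t \<in> {0..1}" for t
  proof -
    have "\<bar>(grad (a + t *\<^sub>R d) - grad a) \<bullet> d\<bar> \<le> norm (grad (a + t *\<^sub>R d) - grad a) * norm d"
      by (rule Cauchy_Schwarz_ineq2)
    also have "\<dots> \<le> L * norm (t *\<^sub>R d) * norm d"
      using lipschitz_onD[OF lip, of "a + t *\<^sub>R d" a] by (simp add: dist_norm mult_right_mono)
    finally show ?thesis using that by (simp add: inner_diff_left power2_eq_square mult_ac)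
  qed
  ultimately have "\<bar>f (a + 1 *\<^sub>R d) - f (a + 0 *\<^sub>R d) - grad (a + 0 *\<^sub>R d) \<bullet> d\<bar>
      \<le> L * (norm d)\<^sup>2 / 2"
    by (rule first_order_remainder_le[where \<phi> = "\<lambda>t. f (a + t *\<^sub>R d)"])
  then show ?thesis by (simp add: d_def)
qed

abbreviation qhess :: "'n quadmodel \<Rightarrow> real^'n^'n" where
  "qhess q \<equiv> snd (snd q)"

lemma qeval_linear: "linear (\<lambda>q. qeval x q z)"
proof -
  define d where "d = z - x"
  show ?thesis
    unfolding qeval_def d_def[symmetric]
    by (rule linearI) (auto simp: case_prod_beta matrix_vector_mult_add_rdistrib
        inner_add_left inner_add_right scaleR_matrix_vector_assoc[symmetric] algebra_simps)
qed

lemma qgrad_linear: "linear (\<lambda>q. qgrad x q z)"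
proof -
  define d where "d = z - x"
  show ?thesis
    unfolding qgrad_def d_def[symmetric]
    by (rule linearI) (auto simp: case_prod_beta matrix_vector_mult_add_rdistrib
        scaleR_matrix_vector_assoc[symmetric] algebra_simps)
qed

lemma frob_sq_eq_norm_power2: "frob_sq H = (norm H)\<^sup>2"
  unfolding power2_norm_eq_inner by (simp add: frob_sq_def inner_vec_def power2_eq_square)

lemma qgrad_norm_le:
  fixes x :: "real^'n"
  assumes sym: "transpose (qhess q) = qhess q" and "\<Delta> > 0"
    and bound: "\<And>w. w \<in> cball x \<Delta> \<Longrightarrow> \<bar>qeval x q w\<bar> \<le> \<Lambda>"
    and z: "z \<in> cball x \<Delta>"
  shows "norm (qgrad x q z) \<le> 9 * \<Lambda> / \<Delta>"
proof -
  obtain c g H where q: "q = (c, g, H)" by (cases q)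
  have "H *v (- p) = - (H *v p)" for p
    using matrix_vector_mult_diff_distrib[of H 0 p] by simp
  then have plus: "qeval x q (x + p) = c + g \<bullet> p + 1/2 * (p \<bullet> (H *v p))"
    and minus: "qeval x q (x - p) = c - g \<bullet> p + 1/2 * (p \<bullet> (H *v p))" for p
    by (simp_all add: q qeval_def)
  have "\<bar>qeval x q (x + p)\<bar> \<le> \<Lambda>" and "\<bar>qeval x q (x - p)\<bar> \<le> \<Lambda>" if "norm p \<le> \<Delta>" for p
    using bound that by (auto simp: dist_norm)
  note bound_pm = this[unfolded plus minus]
  have "\<bar>c\<bar> \<le> \<Lambda>" using bound_pm(1)[of 0] assms(2) by simp
  have lin: "\<bar>g \<bullet> p\<bar> \<le> \<Lambda>" if "norm p \<le> \<Delta>" for p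
    using bound_pm[OF that] by (simp add: abs_le_iff)
  have "\<bar>p \<bullet> (H *v p)\<bar> \<le> 4 * \<Lambda>" if "norm p \<le> \<Delta>" for p
    using bound_pm[OF that] \<open>\<bar>c\<bar> \<le> \<Lambda>\<close> by (simp add: abs_le_iff)
  then have bil: "\<bar>(H *v (z - x)) \<bullet> u\<bar> \<le> 8 * \<Lambda>" if "norm u \<le> \<Delta>" for u
    using symmetric_bilinear_le[of H \<Delta> "4 * \<Lambda>" "z - x" u] sym z that
    by (simp add: q dist_norm norm_minus_commute)
  show ?thesis
  proof (rule norm_le_if_inner_le[OF assms(2)])
    fix u :: "real^'n"
    assume "norm u \<le> \<Delta>"
    then show "qgrad x q z \<bullet> u \<le> 9 * \<Lambda>"
      using lin[of u] bil[of u] by (simp add: q qgrad_def inner_add_left)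
  qed
qed

definition sym_interp ::
    "real^'n \<Rightarrow> ('p \<Rightarrow> real^'n) \<Rightarrow> ('p \<Rightarrow> real) \<Rightarrow> 'n quadmodel \<Rightarrow> bool" where
  "sym_interp x y v q \<longleftrightarrow> transpose (qhess q) = qhess q \<and> (\<forall>i. qeval x q (y i) = v i)"

lemma mfn_interp_iff:
  "mfn_interp x y v q \<longleftrightarrow>
     sym_interp x y v q \<and> (\<forall>q'. sym_interp x y v q' \<longrightarrow> norm (qhess q) \<le> norm (qhess q'))"
  by (cases q) (auto simp: mfn_interp_def sym_interp_def frob_sq_eq_norm_power2)

lemma sym_interp_add_scaleR:
  assumes "sym_interp x y v q" and "sym_interp x y w E"
  shows "sym_interp x y (\<lambda>i. v i + t * w i) (q + t *\<^sub>R E)"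
  using assms
  by (simp add: sym_interp_def linear_add[OF qeval_linear] linear_scale[OF qeval_linear]
      linear_add[OF transpose_linear] linear_scale[OF transpose_linear])

lemma sym_interp_diff:
  assumes "sym_interp x y v q" and "sym_interp x y v q'"
  shows "sym_interp x y (\<lambda>_. 0) (q' - q)"
  using assms
  by (simp add: sym_interp_def linear_diff[OF qeval_linear] linear_diff[OF transpose_linear])

lemma mfn_interp_hessian_orthogonal:
  assumes "mfn_interp x y v q" and "sym_interp x y (\<lambda>_. 0) E"
  shows "qhess q \<bullet> qhess E = 0"
proof (rule inner_eq_0_if_norm_minimal)
  fix t
  have "sym_interp x y v (q + t *\<^sub>R E)"
    using sym_interp_add_scaleR[of x y v q "\<lambda>_. 0" E t] assms by (simp add: mfn_interp_iff)
  then have "norm (qhess q) \<le> norm (qhess (q + t *\<^sub>R E))"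
    using assms(1) unfolding mfn_interp_iff by blast
  then show "norm (qhess q) \<le> norm (qhess q + t *\<^sub>R qhess E)"
    by simp
qed

lemma Fhat_invertible_affine_eq_0:
  fixes x :: "real^'n" and y :: "'p::finite \<Rightarrow> real^'n"
  assumes "invertible (Fhat x \<Delta> y)" and "\<Delta> \<noteq> 0"
    and vanish: "\<And>i. c + g \<bullet> (y i - x) = 0"
  shows "c = 0 \<and> g = 0"
proof -
  define w :: "real^('p + (unit + 'n))" where
    "w = (\<chi> r. case r of Inl _ \<Rightarrow> 0 | Inr (Inl _) \<Rightarrow> c | Inr (Inr k) \<Rightarrow> \<Delta> * g $ k)"
  have "Fhat x \<Delta> y *v w = 0"
    unfolding vec_eq_iff
  proof
    fix r :: "'p + (unit + 'n)"
    show "(Fhat x \<Delta> y *v w) $ r = 0 $ r"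
    proof (cases r)
      case (Inl i)
      have "(Fhat x \<Delta> y *v w) $ r = c + (\<Sum>k\<in>UNIV. (y i - x) $ k / \<Delta> * (\<Delta> * g $ k))"
        using Inl by (simp add: matrix_vector_mult_def Fhat_def w_def sum_UNIV_Plus)
      also have "\<dots> = c + g \<bullet> (y i - x)"
        using assms(2) by (simp add: inner_vec_def mult.commute)
      finally show ?thesis using vanish[of i] by simp
    next
      case (Inr r')
      then show ?thesis
        by (cases r') (simp_all add: matrix_vector_mult_def Fhat_def w_def sum_UNIV_Plus)
    qed
  qed
  then have "w = 0"
    using assms(1) matrix_left_invertible_ker by (auto simp: invertible_def)
  then have "w $ Inr (Inl ()) = 0" and "\<And>k. w $ Inr (Inr k) = 0" by simp_all
  then show ?thesis using assms(2) by (auto simp: w_def vec_eq_iff)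
qed

lemma mfn_interp_eqI:
  fixes x :: "real^'n" and y :: "'p::finite \<Rightarrow> real^'n"
  assumes "invertible (Fhat x \<Delta> y)" and "\<Delta> \<noteq> 0"
    and q: "sym_interp x y v q"
    and orth: "\<And>E. sym_interp x y (\<lambda>_. 0) E \<Longrightarrow> qhess q \<bullet> qhess E = 0"
    and q': "mfn_interp x y v q'"
  shows "q' = q"
proof -
  define E where "E = q' - q"
  have E: "sym_interp x y (\<lambda>_. 0) E"
    unfolding E_def using q q' by (intro sym_interp_diff) (auto simp: mfn_interp_iff)
  have "(norm (qhess q'))\<^sup>2 = (norm (qhess q))\<^sup>2 + (norm (qhess E))\<^sup>2"
    using norm_add_Pythagorean[of "qhess q" "qhess E"] orth[OF E]
    by (simp add: orthogonal_def E_def)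
  moreover have "norm (qhess q') \<le> norm (qhess q)"
    using q q' unfolding mfn_interp_iff by blast
  then have "(norm (qhess q'))\<^sup>2 \<le> (norm (qhess q))\<^sup>2"
    by (simp add: power_mono)
  ultimately have "qhess E = 0" by simp
  then obtain c g where cg: "E = (c, g, 0)" by (cases E) auto
  with E have "\<And>i. c + g \<bullet> (y i - x) = 0"
    by (simp add: sym_interp_def qeval_def)
  with assms(1,2) have "c = 0 \<and> g = 0" by (rule Fhat_invertible_affine_eq_0)
  with cg have "E = 0" by (simp add: zero_prod_def)
  then show ?thesis by (simp add: E_def)
qed

lemma mfn_interp_eq_lagrange_sum:
  fixes x :: "real^'n" and y :: "'p::finite \<Rightarrow> real^'n"
  assumes "invertible (Fhat x \<Delta> y)" and "\<Delta> \<noteq> 0"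
    and lagr: "\<And>i. mfn_interp x y (\<lambda>j. if i = j then 1 else 0) (ell i)"
    and q: "mfn_interp x y v q"
  shows "q = (\<Sum>i\<in>UNIV. v i *\<^sub>R ell i)"
proof (rule mfn_interp_eqI[OF assms(1,2) _ _ q])
  have ell_sym: "transpose (qhess (ell i)) = qhess (ell i)"
    and ell_eval: "qeval x (ell i) (y j) = (if i = j then 1 else 0)" for i j
    using lagr[of i] by (auto simp: mfn_interp_iff sym_interp_def)
  show "sym_interp x y v (\<Sum>i\<in>UNIV. v i *\<^sub>R ell i)"
    by (simp add: ell_sym ell_eval sym_interp_def snd_sum linear_sum[OF qeval_linear]
        linear_sum[OF transpose_linear] linear_scale[OF qeval_linear] linear_scale[OF transpose_linear]
        if_distrib cong: if_cong)
  show "qhess (\<Sum>i\<in>UNIV. v i *\<^sub>R ell i) \<bullet> qhess E = 0" if "sym_interp x y (\<lambda>_. 0) E" for E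
    using mfn_interp_hessian_orthogonal[OF lagr that] by (simp add: snd_sum inner_sum_left)
qed

lemma mfn_interp_affine: "mfn_interp x y (\<lambda>i. c + g \<bullet> (y i - x)) (c, g, 0)"
  by (simp add: mfn_interp_iff sym_interp_def qeval_def linear_0[OF transpose_linear])

lemma mfn_interp_eq_affine_plus_lagrange_sum:
  fixes x :: "real^'n" and y :: "'p::finite \<Rightarrow> real^'n"
  assumes "invertible (Fhat x \<Delta> y)" and "\<Delta> \<noteq> 0"
    and "\<And>i. mfn_interp x y (\<lambda>j. if i = j then 1 else 0) (ell i)"
    and "mfn_interp x y v q"
  shows "q = (c, g, 0) + (\<Sum>i\<in>UNIV. (v i - (c + g \<bullet> (y i - x))) *\<^sub>R ell i)"
proof -
  have "q = (\<Sum>i\<in>UNIV. v i *\<^sub>R ell i)"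
    and "(c, g, 0) = (\<Sum>i\<in>UNIV. (c + g \<bullet> (y i - x)) *\<^sub>R ell i)"
    using mfn_interp_eq_lagrange_sum[OF assms(1-3)] assms(4) mfn_interp_affine by blast+
  then show ?thesis by (simp add: scaleR_diff_left sum_subtractf)
qed

lemma mfn_value_error_le:
  fixes f :: "real^'n \<Rightarrow> real" and ell :: "'p::finite \<Rightarrow> 'n quadmodel"
  assumes deriv: "\<And>z. (f has_derivative (\<lambda>h. grad z \<bullet> h)) (at z)"
    and lip: "L-lipschitz_on UNIV grad"
    and m: "m = (f x, grad x, 0) + (\<Sum>i\<in>UNIV. r i *\<^sub>R ell i)"
    and r: "\<And>i. \<bar>r i\<bar> \<le> R"
    and lam: "(\<Sum>i\<in>UNIV. \<bar>qeval x (ell i) z\<bar>) \<le> \<Lambda>1"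
    and z: "z \<in> cball x \<Delta>"
  shows "\<bar>qeval x m z - f z\<bar> \<le> L / 2 * \<Delta>\<^sup>2 + R * \<Lambda>1"
proof -
  have "qeval x m z - f z = (f x + grad x \<bullet> (z - x) - f z) + (\<Sum>i\<in>UNIV. r i * qeval x (ell i) z)"
    by (simp add: m linear_add[OF qeval_linear] linear_sum[OF qeval_linear]
        linear_scale[OF qeval_linear] qeval_def[of x "(_, _, 0)"])
  moreover have "\<bar>f x + grad x \<bullet> (z - x) - f z\<bar> \<le> L / 2 * \<Delta>\<^sup>2"
  proof -
    have "\<bar>f z - f x - grad x \<bullet> (z - x)\<bar> \<le> L / 2 * (norm (z - x))\<^sup>2"
      by (rule lipschitz_gradient_remainder_le[OF deriv lip])
    also have "\<dots> \<le> L / 2 * \<Delta>\<^sup>2"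
      using z lipschitz_on_nonneg[OF lip]
      by (intro mult_left_mono power_mono) (auto simp: dist_norm norm_minus_commute)
    finally show ?thesis by (simp add: abs_minus_commute diff_diff_eq)
  qed
  moreover have "\<bar>\<Sum>i\<in>UNIV. r i * qeval x (ell i) z\<bar> \<le> R * \<Lambda>1"
  proof -
    have "\<bar>\<Sum>i\<in>UNIV. r i * qeval x (ell i) z\<bar> \<le> R * (\<Sum>i\<in>UNIV. \<bar>qeval x (ell i) z\<bar>)"
      using norm_sum_scaleR_le[of UNIV r R "\<lambda>i. qeval x (ell i) z"] r by simp
    also have "\<dots> \<le> R * \<Lambda>1"
      using lam r[of undefined] by (intro mult_left_mono) auto
    finally show ?thesis .
  qed
  ultimately show ?thesis by linarith
qed

lemma mfn_gradient_error_le: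
  fixes grad :: "real^'n \<Rightarrow> real^'n" and ell :: "'p::finite \<Rightarrow> 'n quadmodel"
  assumes lip: "L-lipschitz_on UNIV grad" and "\<Delta> > 0"
    and m: "m = (c, grad x, 0) + (\<Sum>i\<in>UNIV. r i *\<^sub>R ell i)"
    and r: "\<And>i. \<bar>r i\<bar> \<le> R"
    and sym: "\<And>i. transpose (qhess (ell i)) = qhess (ell i)"
    and lam: "\<And>w i. w \<in> cball x \<Delta> \<Longrightarrow> \<bar>qeval x (ell i) w\<bar> \<le> \<Lambda>inf"
    and z: "z \<in> cball x \<Delta>"
  shows "norm (qgrad x m z - grad z) \<le> L * \<Delta> + R * (CARD('p) * (9 * \<Lambda>inf / \<Delta>))"
proof -
  have split: "qgrad x m z - grad z = (grad x - grad z) + (\<Sum>i\<in>UNIV. r i *\<^sub>R qgrad x (ell i) z)"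
    by (simp add: m linear_add[OF qgrad_linear] linear_sum[OF qgrad_linear]
        linear_scale[OF qgrad_linear] qgrad_def[of x "(_, _, 0)"])
  have lipschitz_part: "norm (grad x - grad z) \<le> L * \<Delta>"
  proof -
    have "norm (grad x - grad z) \<le> L * dist x z"
      using lipschitz_onD[OF lip, of x z] by (simp add: dist_norm)
    also have "\<dots> \<le> L * \<Delta>"
      using z lipschitz_on_nonneg[OF lip] by (intro mult_left_mono) auto
    finally show ?thesis .
  qed
  have lagrange_part:
    "norm (\<Sum>i\<in>UNIV. r i *\<^sub>R qgrad x (ell i) z) \<le> R * (CARD('p) * (9 * \<Lambda>inf / \<Delta>))"
  proof -
    have "norm (\<Sum>i\<in>UNIV. r i *\<^sub>R qgrad x (ell i) z)
        \<le> R * (\<Sum>i\<in>UNIV. norm (qgrad x (ell i) z))"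
      using r by (rule norm_sum_scaleR_le)
    also have "\<dots> \<le> R * (CARD('p) * (9 * \<Lambda>inf / \<Delta>))"
    proof (rule mult_left_mono)
      show "(\<Sum>i\<in>UNIV. norm (qgrad x (ell i) z)) \<le> CARD('p) * (9 * \<Lambda>inf / \<Delta>)"
        by (rule sum_bounded_above) (rule qgrad_norm_le[OF sym \<open>\<Delta> > 0\<close> lam z])
      show "0 \<le> R" using r[of undefined] by simp
    qed
    finally show ?thesis .
  qed
  show ?thesis
    unfolding split by (intro norm_triangle_le add_mono lipschitz_part lagrange_part)
qed

lemma mfn_model_error_le:
  fixes f :: "real^'n \<Rightarrow> real" and y :: "'p::finite \<Rightarrow> real^'n"
  assumes deriv: "\<And>z. (f has_derivative (\<lambda>h. grad z \<bullet> h)) (at z)"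
    and lip: "L-lipschitz_on UNIV grad" and "\<Delta> > 0"
    and pts: "\<And>i. norm (y i - x) \<le> \<beta> * \<Delta>"
    and Finv: "invertible (Fhat x \<Delta> y)"
    and model: "mfn_interp x y (\<lambda>i. f (y i)) m"
    and lagr: "\<And>i. mfn_interp x y (\<lambda>j. if i = j then 1 else 0) (ell i)"
    and Lam1: "(\<Sum>i\<in>UNIV. \<bar>qeval x (ell i) z\<bar>) \<le> \<Lambda>1"
    and Laminf: "\<And>w i. w \<in> cball x \<Delta> \<Longrightarrow> \<bar>qeval x (ell i) w\<bar> \<le> \<Lambda>inf"
    and z: "z \<in> cball x \<Delta>"
  shows "\<bar>qeval x m z - f z\<bar> \<le> L / 2 * (1 + \<beta>\<^sup>2 * \<Lambda>1) * \<Delta>\<^sup>2"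
    and "norm (qgrad x m z - grad z) \<le> L * (1 + 9 / 2 * CARD('p) * \<beta>\<^sup>2 * \<Lambda>inf) * \<Delta>"
proof -
  define r where "r i = f (y i) - (f x + grad x \<bullet> (y i - x))" for i
  have m: "m = (f x, grad x, 0) + (\<Sum>i\<in>UNIV. r i *\<^sub>R ell i)"
    unfolding r_def using mfn_interp_eq_affine_plus_lagrange_sum[OF Finv _ lagr model] \<open>\<Delta> > 0\<close>
    by simp
  have r: "\<bar>r i\<bar> \<le> L / 2 * (\<beta> * \<Delta>)\<^sup>2" for i
  proof -
    have "\<bar>r i\<bar> \<le> L / 2 * (norm (y i - x))\<^sup>2"
      unfolding r_def diff_diff_eq[symmetric] by (rule lipschitz_gradient_remainder_le[OF deriv lip])
    also have "\<dots> \<le> L / 2 * (\<beta> * \<Delta>)\<^sup>2"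
      using pts[of i] lipschitz_on_nonneg[OF lip] by (intro mult_left_mono power_mono) auto
    finally show ?thesis .
  qed
  have sym: "transpose (qhess (ell i)) = qhess (ell i)" for i
    using lagr[of i] by (simp add: mfn_interp_iff sym_interp_def)
  show "\<bar>qeval x m z - f z\<bar> \<le> L / 2 * (1 + \<beta>\<^sup>2 * \<Lambda>1) * \<Delta>\<^sup>2"
    using mfn_value_error_le[OF deriv lip m r Lam1 z] by (simp add: algebra_simps power_mult_distrib)
  show "norm (qgrad x m z - grad z) \<le> L * (1 + 9 / 2 * CARD('p) * \<beta>\<^sup>2 * \<Lambda>inf) * \<Delta>"
    using mfn_gradient_error_le[OF lip \<open>\<Delta> > 0\<close> m r sym Laminf z] \<open>\<Delta> > 0\<close>
    by (simp add: field_simps power2_eq_square)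
qed

theorem theorem6p8:
  fixes f :: "real^'n \<Rightarrow> real" and grad :: "real^'n \<Rightarrow> real^'n"
    and L :: real and x :: "real^'n" and \<Delta> \<beta> \<Lambda>1 \<Lambda>inf :: real
    and y :: "'p::finite \<Rightarrow> real^'n"
    and m :: "'n quadmodel" and ell :: "'p \<Rightarrow> 'n quadmodel"
  assumes p_lower: "CARD('n) + 2 \<le> CARD('p)"
    and p_upper: "CARD('p) \<le> (CARD('n) + 1) * (CARD('n) + 2) div 2 - 1"
    and bdd: "bdd_below (range f)"
    and deriv: "\<And>z. (f has_derivative (\<lambda>h. grad z \<bullet> h)) (at z)"
    and grad_cont: "continuous_on UNIV grad"
    and lip: "L-lipschitz_on UNIV grad"
    and Delta_pos: "\<Delta> > 0" and beta_pos: "\<beta> > 0"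
    and pts: "\<And>i. norm (y i - x) \<le> \<beta> * \<Delta>"
    and Finv: "invertible (Fhat x \<Delta> y)"
    and model: "mfn_interp x y (\<lambda>i. f (y i)) m"
    and lagr: "\<And>i. mfn_interp x y (\<lambda>j. if i = j then 1 else 0) (ell i)"
    and Lam1: "\<And>z. z \<in> cball x \<Delta> \<Longrightarrow> (\<Sum>i\<in>UNIV. \<bar>qeval x (ell i) z\<bar>) \<le> \<Lambda>1"
    and Laminf: "\<And>z i. z \<in> cball x \<Delta> \<Longrightarrow> \<bar>qeval x (ell i) z\<bar> \<le> \<Lambda>inf"
  shows "let \<kappa>H = 12 * L * real CARD('p) * \<beta>^2 * \<Lambda>inf;
             \<kappa>mf = (L + \<kappa>H) / 2 * \<beta>^2 * \<Lambda>1 + (L + \<kappa>H) / 2;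
             \<kappa>mg = 2 * \<kappa>mf + 2 * \<kappa>H
         in \<forall>z \<in> cball x \<Delta>. \<bar>qeval x m z - f z\<bar> \<le> \<kappa>mf * \<Delta>^2 \<and>
                            norm (qgrad x m z - grad z) \<le> \<kappa>mg * \<Delta>"
proof -
  define \<kappa>H where "\<kappa>H = 12 * L * real CARD('p) * \<beta>^2 * \<Lambda>inf"
  define \<kappa>mf where "\<kappa>mf = (L + \<kappa>H) / 2 * \<beta>^2 * \<Lambda>1 + (L + \<kappa>H) / 2"
  define \<kappa>mg where "\<kappa>mg = 2 * \<kappa>mf + 2 * \<kappa>H"
  have "x \<in> cball x \<Delta>" using Delta_pos by simp
  then have "0 \<le> \<Lambda>1" and "0 \<le> \<Lambda>inf"
    using Lam1 Laminf by (meson abs_ge_zero order_trans sum_nonneg)+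
  moreover have "0 \<le> L" using lip lipschitz_on_nonneg by blast
  ultimately have "0 \<le> \<kappa>H" and "0 \<le> (L + \<kappa>H) * \<beta>\<^sup>2 * \<Lambda>1" and "0 \<le> \<kappa>H * \<beta>\<^sup>2 * \<Lambda>1"
    by (simp_all add: \<kappa>H_def)
  then have mf: "L / 2 * (1 + \<beta>\<^sup>2 * \<Lambda>1) \<le> \<kappa>mf"
    and mg: "L * (1 + 9 / 2 * CARD('p) * \<beta>\<^sup>2 * \<Lambda>inf) \<le> \<kappa>mg"
    by (simp_all add: \<kappa>mg_def \<kappa>mf_def \<kappa>H_def field_simps)
  show ?thesis
    unfolding Let_def \<kappa>H_def[symmetric] \<kappa>mf_def[symmetric] \<kappa>mg_def[symmetric]
  proof (intro ballI conjI)
    fix z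
    assume z: "z \<in> cball x \<Delta>"
    note error = mfn_model_error_le[OF deriv lip Delta_pos pts Finv model lagr Lam1[OF z] Laminf z]
    show "\<bar>qeval x m z - f z\<bar> \<le> \<kappa>mf * \<Delta>\<^sup>2"
      using error(1) mf by (meson mult_right_mono order_trans zero_le_power2)
    show "norm (qgrad x m z - grad z) \<le> \<kappa>mg * \<Delta>"
      using error(2) mg Delta_pos by (meson mult_right_mono order_trans less_imp_le)
  qed
qed

end
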